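(* Let $\Omega\subset\mathbb R^3$ be a bounded domain and $T'>0$. For $\alpha>0$ let $W_{\mathrm{sg},\alpha}(\varphi):=\alpha\big((1+\alpha+\varphi)\ln(1+\alpha+\varphi)+(1+\alpha-\varphi)\ln(1+\alpha-\varphi)\big)$ for $|\varphi|\le1+\alpha$ (with $0\ln0=0$), and define on $L^2(0,T';L^2(\Omega))$ $$\mathcal E_{\mathrm{sg},\alpha}(\varphi):=\begin{cases}\int_0^{T'}\!\int_\Omega W_{\mathrm{sg},\alpha}(\varphi)\,dx\,d\tau&\text{if }|\varphi|\le1+\alpha\text{ a.e. in }\Omega\times(0,T'),\\+\infty&\text{otherwise},\end{cases}\qquad \mathcal I_K(\varphi):=\begin{cases}0&\varphi\in K,\\+\infty&\varphi\notin K,\end{cases}$$ with $K:=\{\varphi\in L^2(0,T';L^2(\Omega)):|\varphi|\le1\text{ a.e. in }\Omega\times(0,T')\}$. Then $\mathcal E_{\mathrm{sg},\alpha}\to\mathcal I_K$ in the sense of Mosco in $L^2(0,T';L^2(\Omega))$ as $\alpha\searrow0$, i.e.: (M1) for every family $\varphi_\alpha\rightharpoonup\varphi$ weakly in $L^2(0,T';L^2(\Omega))$, $\liminf_{\alpha\searrow0}\mathcal E_{\mathrm{sg},\alpha}(\varphi_\alpha)\ge\mathcal I_K(\varphi)$; (M2) for every $\varphi\in L^2(0,T';L^2(\Omega))$ there is a family $\varphi_\alpha\to\varphi$ strongly in $L^2(0,T';L^2(\Omega))$ with $\limsup_{\alpha\searrow0}\mathcal E_{\mathrm{sg},\alpha}(\varphi_\alpha)\le\mathcal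 I_K(\varphi)$. *)

theory Defs
  imports "HOL-Analysis.Analysis"
begin

definition xlnx :: "real \<Rightarrow> real" where
  "xlnx x = (if x = 0 then 0 else x * ln x)"

definition W_sg :: "real \<Rightarrow> real \<Rightarrow> real" where
  "W_sg \<alpha> s = \<alpha> * (xlnx (1 + \<alpha> + s) + xlnx (1 + \<alpha> - s))"

text \<open>Space-time cylinder Omega x (0,T') and its Lebesgue measure;
  L^2(0,T';L^2(Omega)) is identified with L^2(Omega x (0,T')).\<close>
definition cyl :: "(real^3) set \<Rightarrow> real \<Rightarrow> ((real^3) \<times> real) set" where
  "cyl \<Omega> T' = \<Omega> \<times> {0<..<T'}"

definition L2 :: "'a measure \<Rightarrow> ('a \<Rightarrow> real) \<Rightarrow> bool" where
  "L2 M f \<longleftrightarrow> f \<in> borel_measurable M \<and> integrable M (\<lambda>x. (f x)\<^sup>2)"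

definition E_sg :: "'a measure \<Rightarrow> real \<Rightarrow> ('a \<Rightarrow> real) \<Rightarrow> ereal" where
  "E_sg M \<alpha> \<phi> = (if AE x in M. \<bar>\<phi> x\<bar> \<le> 1 + \<alpha>
                    then ereal (\<integral>x. W_sg \<alpha> (\<phi> x) \<partial>M) else \<infinity>)"

definition I_K :: "'a measure \<Rightarrow> ('a \<Rightarrow> real) \<Rightarrow> ereal" where
  "I_K M \<phi> = (if L2 M \<phi> \<and> (AE x in M. \<bar>\<phi> x\<bar> \<le> 1) then 0 else \<infinity>)"

definition weak_L2_conv :: "'a measure \<Rightarrow> ('b \<Rightarrow> 'a \<Rightarrow> real) \<Rightarrow> ('a \<Rightarrow> real) \<Rightarrow> 'b filter \<Rightarrow> bool" where
  "weak_L2_conv M fs f F \<longleftrightarrow>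
     (\<forall>\<psi>. L2 M \<psi> \<longrightarrow> ((\<lambda>a. \<integral>x. fs a x * \<psi> x \<partial>M) \<longlongrightarrow> (\<integral>x. f x * \<psi> x \<partial>M)) F)"

definition strong_L2_conv :: "'a measure \<Rightarrow> ('b \<Rightarrow> 'a \<Rightarrow> real) \<Rightarrow> ('a \<Rightarrow> real) \<Rightarrow> 'b filter \<Rightarrow> bool" where
  "strong_L2_conv M fs f F \<longleftrightarrow>
     ((\<lambda>a. \<integral>x. (fs a x - f x)\<^sup>2 \<partial>M) \<longlongrightarrow> 0) F"

end

theory Submission
  imports Defs
begin

text \<open>On K the potential is squeezed between \<open>-2\<alpha>\<close> and \<open>O(\<alpha>)\<close>, so on a space of finite
  measure \<open>E_sg \<alpha>\<close> is bounded below by \<open>-2\<alpha> |\<Omega> \<times> (0,T')|\<close> for every argument and tends to 0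
  on K; this gives the liminf inequality on K and, with the constant recovery family, the
  limsup inequality. Off K, testing weak convergence against \<open>sgn \<phi>\<close> restricted to
  \<open>{|\<phi>| > 1}\<close> shows that weak limits of functions bounded by \<open>1 + \<alpha>\<close> are bounded by 1, so
  \<open>|\<phi>\<^sub>\<alpha>| \<le> 1 + \<alpha>\<close> fails for all small \<open>\<alpha>\<close> and \<open>E_sg \<alpha> \<phi>\<^sub>\<alpha> = \<infinity>\<close>.\<close>

lemma xlnx_ge_minus_one:
  assumes "0 \<le> y"
  shows "-1 \<le> xlnx y"
proof (cases "y = 0")
  case False
  then have y: "0 < y" using assms by simp
  have "- ln y \<le> 1 / y - 1"
    using ln_le_minus_one[of "1 / y"] y by (simp add: ln_div)
  then have "y * (- ln y) \<le> y * (1 / y - 1)" using y by (intro mult_left_mono) auto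
  then show ?thesis using y by (simp add: xlnx_def right_diff_distrib)
qed (simp add: xlnx_def)

lemma xlnx_le:
  assumes "0 \<le> y"
  shows "xlnx y \<le> y * (y - 1)"
proof (cases "y = 0")
  case False
  then have "0 < y" using assms by simp
  then show ?thesis by (simp add: xlnx_def ln_le_minus_one mult_left_mono)
qed (simp add: xlnx_def)

lemma W_sg_ge:
  assumes "0 \<le> \<alpha>" "\<bar>s\<bar> \<le> 1 + \<alpha>"
  shows "-2 * \<alpha> \<le> W_sg \<alpha> s"
proof -
  have arg: "0 \<le> 1 + \<alpha> + s" "0 \<le> 1 + \<alpha> - s" using assms(2) by auto
  have "-2 \<le> xlnx (1 + \<alpha> + s) + xlnx (1 + \<alpha> - s)"
    using xlnx_ge_minus_one[OF arg(1)] xlnx_ge_minus_one[OF arg(2)] by linarith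
  then have "\<alpha> * -2 \<le> \<alpha> * (xlnx (1 + \<alpha> + s) + xlnx (1 + \<alpha> - s))"
    using assms(1) by (rule mult_left_mono)
  then show ?thesis by (simp add: W_sg_def)
qed

lemma W_sg_le:
  assumes "0 \<le> \<alpha>" "\<bar>s\<bar> \<le> 1 + \<alpha>"
  shows "W_sg \<alpha> s \<le> 2 * \<alpha> * (\<alpha> + \<alpha>\<^sup>2 + s\<^sup>2)"
proof -
  have arg: "0 \<le> 1 + \<alpha> + s" "0 \<le> 1 + \<alpha> - s" using assms(2) by auto
  have "xlnx (1 + \<alpha> + s) + xlnx (1 + \<alpha> - s)
          \<le> (1 + \<alpha> + s) * (1 + \<alpha> + s - 1) + (1 + \<alpha> - s) * (1 + \<alpha> - s - 1)"
    using xlnx_le[OF arg(1)] xlnx_le[OF arg(2)] by linarith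
  also have "\<dots> = 2 * (\<alpha> + \<alpha>\<^sup>2 + s\<^sup>2)" by (simp add: algebra_simps power2_eq_square)
  finally have "\<alpha> * (xlnx (1 + \<alpha> + s) + xlnx (1 + \<alpha> - s)) \<le> \<alpha> * (2 * (\<alpha> + \<alpha>\<^sup>2 + s\<^sup>2))"
    using assms(1) by (rule mult_left_mono)
  then show ?thesis by (simp add: W_sg_def mult_ac)
qed

lemma (in finite_measure) E_sg_ge:
  assumes "0 < \<alpha>"
  shows "ereal (-2 * \<alpha> * measure M (space M)) \<le> E_sg M \<alpha> f"
proof (cases "AE x in M. \<bar>f x\<bar> \<le> 1 + \<alpha>")
  case bounded: True
  have "-2 * \<alpha> * measure M (space M) \<le> (\<integral>x. W_sg \<alpha> (f x) \<partial>M)"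
  proof (cases "integrable M (\<lambda>x. W_sg \<alpha> (f x))")
    case True
    have "(\<integral>x. -2 * \<alpha> \<partial>M) \<le> (\<integral>x. W_sg \<alpha> (f x) \<partial>M)"
      using True bounded W_sg_ge[of \<alpha>] assms
      by (intro integral_mono_AE) (auto elim!: eventually_mono)
    then show ?thesis by (simp add: mult_ac)
  qed (use assms in \<open>simp add: not_integrable_integral_eq\<close>)
  then show ?thesis using bounded by (simp add: E_sg_def)
qed (simp add: E_sg_def)

lemma (in finite_measure) E_sg_le:
  assumes "0 < \<alpha>" and K: "AE x in M. \<bar>f x\<bar> \<le> 1"
  shows "E_sg M \<alpha> f \<le> ereal (2 * \<alpha> * (\<alpha> + \<alpha>\<^sup>2 + 1) * measure M (space M))"
proof -
  have bound: "W_sg \<alpha> s \<le> 2 * \<alpha> * (\<alpha> + \<alpha>\<^sup>2 + 1)" if "\<bar>s\<bar> \<le> 1" for s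
  proof -
    have "W_sg \<alpha> s \<le> 2 * \<alpha> * (\<alpha> + \<alpha>\<^sup>2 + s\<^sup>2)"
      using assms(1) that by (intro W_sg_le) auto
    also have "\<dots> \<le> 2 * \<alpha> * (\<alpha> + \<alpha>\<^sup>2 + 1)"
      using assms(1) that by (intro mult_left_mono) (auto simp: abs_square_le_1)
    finally show ?thesis .
  qed
  have "(\<integral>x. W_sg \<alpha> (f x) \<partial>M) \<le> 2 * \<alpha> * (\<alpha> + \<alpha>\<^sup>2 + 1) * measure M (space M)"
  proof (cases "integrable M (\<lambda>x. W_sg \<alpha> (f x))")
    case True
    have "(\<integral>x. W_sg \<alpha> (f x) \<partial>M) \<le> (\<integral>x. 2 * \<alpha> * (\<alpha> + \<alpha>\<^sup>2 + 1) \<partial>M)"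
      using True K by (intro integral_mono_AE) (auto elim!: eventually_mono intro: bound)
    then show ?thesis by (simp add: mult_ac)
  qed (use assms in \<open>simp add: not_integrable_integral_eq\<close>)
  moreover have "AE x in M. \<bar>f x\<bar> \<le> 1 + \<alpha>" using K assms(1) by (auto elim!: eventually_mono)
  ultimately show ?thesis by (simp add: E_sg_def)
qed

lemma tendsto_le_frequently:
  fixes f g :: "'a \<Rightarrow> real"
  assumes "(f \<longlongrightarrow> a) F" "(g \<longlongrightarrow> b) F" "\<exists>\<^sub>F x in F. f x \<le> g x"
  shows "a \<le> b"
proof (rule ccontr)
  assume "\<not> a \<le> b"
  then have "\<forall>\<^sub>F x in F. 0 < f x - g x"
    using tendsto_diff[OF assms(1,2)] by (intro order_tendstoD(1)) auto
  then have "\<forall>\<^sub>F x in F. \<not> f x \<le> g x" by eventually_elim simp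
  with assms(3) show False by (simp add: frequently_def)
qed

lemma (in finite_measure) L2_bounded:
  assumes "g \<in> borel_measurable M" "\<And>x. x \<in> space M \<Longrightarrow> \<bar>g x\<bar> \<le> B"
  shows "L2 M g"
proof -
  have "(g x)\<^sup>2 \<le> B\<^sup>2" if "x \<in> space M" for x
    using power_mono[OF assms(2)[OF that], of 2] by simp
  then show ?thesis
    unfolding L2_def using assms(1) by (auto intro!: integrable_const_bound[where B = "B\<^sup>2"])
qed

lemma (in finite_measure) L2_mult_bounded_integrable:
  assumes "L2 M f" "g \<in> borel_measurable M" "\<And>x. x \<in> space M \<Longrightarrow> \<bar>g x\<bar> \<le> B"
  shows "integrable M (\<lambda>x. f x * g x)"
proof (rule Bochner_Integration.integrable_bound)
  show "integrable M (\<lambda>x. B * f x)"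
    using assms(1) square_integrable_imp_integrable by (auto simp: L2_def)
  show "(\<lambda>x. f x * g x) \<in> borel_measurable M" using assms(1,2) by (simp add: L2_def borel_measurable_times)
  show "AE x in M. norm (f x * g x) \<le> norm (B * f x)"
  proof (rule AE_I2)
    fix x assume "x \<in> space M"
    then have "\<bar>f x\<bar> * \<bar>g x\<bar> \<le> \<bar>f x\<bar> * \<bar>B\<bar>"
      using assms(3) by (intro mult_left_mono) (auto intro: order_trans[OF _ abs_ge_self])
    then show "norm (f x * g x) \<le> norm (B * f x)" by (simp add: abs_mult mult.commute)
  qed
qed

text \<open>The test function is \<open>sgn f\<close> on \<open>A = {|f| > c}\<close>: it turns the pairing with \<open>f\<close> into
  \<open>\<integral>\<^sub>A |f|\<close>, while the pairing with \<open>fs a\<close> is at most \<open>r a \<mu>(A)\<close>.\<close>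

lemma (in finite_measure) weak_L2_limit_AE_abs_le:
  fixes fs :: "'b \<Rightarrow> 'a \<Rightarrow> real"
  assumes f: "L2 M f" and weak: "weak_L2_conv M fs f F" and r: "(r \<longlongrightarrow> c) F"
    and bounded: "\<exists>\<^sub>F a in F. L2 M (fs a) \<and> (AE x in M. \<bar>fs a x\<bar> \<le> r a)"
  shows "AE x in M. \<bar>f x\<bar> \<le> c"
proof -
  have [measurable]: "f \<in> borel_measurable M" using f by (simp add: L2_def)
  define A where "A = {x \<in> space M. c < \<bar>f x\<bar>}"
  define \<psi> where "\<psi> x = indicator A x * sgn (f x)" for x
  have A [measurable]: "A \<in> sets M" unfolding A_def by measurable
  have \<psi> [measurable]: "\<psi> \<in> borel_measurable M" unfolding \<psi>_def by measurable
  have \<psi>_le: "\<bar>\<psi> x\<bar> \<le> indicator A x" for x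
    by (simp add: \<psi>_def abs_mult indicator_def sgn_if)
  then have \<psi>_le_1: "\<bar>\<psi> x\<bar> \<le> 1" for x by (meson indicator_le_1 order_trans)
  have int_A: "integrable M (indicator A :: 'a \<Rightarrow> real)"
    using A by (simp add: less_top[symmetric])
  have int_f\<psi>: "integrable M (\<lambda>x. f x * \<psi> x)"
    using f \<psi> \<psi>_le_1 by (rule L2_mult_bounded_integrable)
  have "((\<lambda>a. \<integral>x. fs a x * \<psi> x \<partial>M) \<longlongrightarrow> (\<integral>x. f x * \<psi> x \<partial>M)) F"
    using weak L2_bounded[OF \<psi> \<psi>_le_1] by (simp add: weak_L2_conv_def)
  moreover have "((\<lambda>a. r a * measure M A) \<longlongrightarrow> c * measure M A) F"
    using r by (intro tendsto_mult_right)
  moreover have "\<exists>\<^sub>F a in F. (\<integral>x. fs a x * \<psi> x \<partial>M) \<le> r a * measure M A"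
    using bounded
  proof (rule frequently_elim1)
    fix a assume a: "L2 M (fs a) \<and> (AE x in M. \<bar>fs a x\<bar> \<le> r a)"
    have "(\<integral>x. fs a x * \<psi> x \<partial>M) \<le> (\<integral>x. r a * indicator A x \<partial>M)"
    proof (rule integral_mono_AE)
      show "integrable M (\<lambda>x. fs a x * \<psi> x)"
        using a \<psi> \<psi>_le_1 by (intro L2_mult_bounded_integrable) auto
      show "AE x in M. fs a x * \<psi> x \<le> r a * indicator A x"
        using a
      proof (elim conjE eventually_mono)
        fix x assume "\<bar>fs a x\<bar> \<le> r a"
        then have "\<bar>fs a x\<bar> * \<bar>\<psi> x\<bar> \<le> r a * indicator A x"
          using \<psi>_le by (intro mult_mono) auto
        then show "fs a x * \<psi> x \<le> r a * indicator A x"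
          by (metis abs_ge_self abs_mult order_trans)
      qed
    qed (simp add: int_A)
    also have "\<dots> = r a * measure M A"
      using sets.sets_into_space[OF A] by (simp add: Int_absorb2)
    finally show "(\<integral>x. fs a x * \<psi> x \<partial>M) \<le> r a * measure M A" .
  qed
  ultimately have f\<psi>_le: "(\<integral>x. f x * \<psi> x \<partial>M) \<le> c * measure M A"
    by (rule tendsto_le_frequently)
  define h where "h x = indicator A x * (\<bar>f x\<bar> - c)" for x
  have h_eq: "h x = f x * \<psi> x - c * indicator A x" for x
    by (simp add: h_def \<psi>_def indicator_def sgn_if)
  have int_h: "integrable M h" unfolding h_eq using int_f\<psi> int_A by simp
  have h_nonneg: "AE x in M. 0 \<le> h x" by (intro AE_I2) (simp add: h_def A_def indicator_def)
  have "(\<integral>x. h x \<partial>M) = (\<integral>x. f x * \<psi> x \<partial>M) - c * measure M A"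
    unfolding h_eq using int_f\<psi> int_A sets.sets_into_space[OF A] by (simp add: Int_absorb2)
  then have "(\<integral>x. h x \<partial>M) = 0"
    using f\<psi>_le integral_nonneg_AE[OF h_nonneg] by linarith
  then have "AE x in M. h x = 0" using integral_nonneg_eq_0_iff_AE[OF int_h h_nonneg] by simp
  then show ?thesis
    using AE_space by eventually_elim (auto simp: h_def A_def indicator_def split: if_splits)
qed

lemma (in finite_measure) I_K_le_Liminf_E_sg:
  assumes "\<forall>\<alpha>>0. L2 M (\<phi>s \<alpha>)" "L2 M \<phi>" "weak_L2_conv M \<phi>s \<phi> (at_right 0)"
  shows "I_K M \<phi> \<le> Liminf (at_right 0) (\<lambda>\<alpha>. E_sg M \<alpha> (\<phi>s \<alpha>))"
proof (cases "AE x in M. \<bar>\<phi> x\<bar> \<le> 1")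
  case True
  have "((\<lambda>\<alpha>. ereal (-2 * \<alpha> * measure M (space M))) \<longlongrightarrow> ereal (-2 * 0 * measure M (space M)))
          (at_right 0)"
    by (intro tendsto_intros)
  then have "Liminf (at_right 0) (\<lambda>\<alpha>. ereal (-2 * \<alpha> * measure M (space M))) = 0"
    by (intro lim_imp_Liminf) (simp_all add: zero_ereal_def)
  moreover have "\<forall>\<^sub>F \<alpha> in at_right 0. ereal (-2 * \<alpha> * measure M (space M)) \<le> E_sg M \<alpha> (\<phi>s \<alpha>)"
    using eventually_at_right_less[of 0] by eventually_elim (rule E_sg_ge)
  then have "Liminf (at_right 0) (\<lambda>\<alpha>. ereal (-2 * \<alpha> * measure M (space M)))
               \<le> Liminf (at_right 0) (\<lambda>\<alpha>. E_sg M \<alpha> (\<phi>s \<alpha>))"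
    by (rule Liminf_mono)
  ultimately show ?thesis using True assms(2) by (simp add: I_K_def)
next
  case False
  have "\<forall>\<^sub>F \<alpha> in at_right 0. \<not> (AE x in M. \<bar>\<phi>s \<alpha> x\<bar> \<le> 1 + \<alpha>)"
  proof (rule ccontr)
    assume "\<not> ?thesis"
    then have "\<exists>\<^sub>F \<alpha> in at_right 0. AE x in M. \<bar>\<phi>s \<alpha> x\<bar> \<le> 1 + \<alpha>"
      by (simp add: frequently_def)
    moreover have "\<forall>\<^sub>F \<alpha> in at_right 0. L2 M (\<phi>s \<alpha>)"
      using eventually_at_right_less[of 0] assms(1) by (auto elim: eventually_mono)
    ultimately have "\<exists>\<^sub>F \<alpha> in at_right 0. L2 M (\<phi>s \<alpha>) \<and> (AE x in M. \<bar>\<phi>s \<alpha> x\<bar> \<le> 1 + \<alpha>)"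
      by (rule frequently_eventually_conj)
    moreover have "((\<lambda>\<alpha>. 1 + \<alpha>) \<longlongrightarrow> 1 + 0) (at_right (0::real))" by (intro tendsto_intros)
    ultimately have "AE x in M. \<bar>\<phi> x\<bar> \<le> 1"
      using assms(2,3) weak_L2_limit_AE_abs_le by simp
    with False show False ..
  qed
  then have "((\<lambda>\<alpha>. E_sg M \<alpha> (\<phi>s \<alpha>)) \<longlongrightarrow> \<infinity>) (at_right 0)"
    by (intro tendsto_eventually) (auto elim!: eventually_mono simp: E_sg_def)
  then show ?thesis by (simp add: lim_imp_Liminf)
qed

lemma (in finite_measure) Limsup_E_sg_le_I_K:
  "Limsup (at_right 0) (\<lambda>\<alpha>. E_sg M \<alpha> \<phi>) \<le> I_K M \<phi>"
proof (cases "AE x in M. \<bar>\<phi> x\<bar> \<le> 1")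
  case True
  let ?bound = "\<lambda>\<alpha>. 2 * \<alpha> * (\<alpha> + \<alpha>\<^sup>2 + 1) * measure M (space M)"
  have "((\<lambda>\<alpha>. ereal (?bound \<alpha>)) \<longlongrightarrow> ereal (?bound 0)) (at_right 0)"
    by (intro tendsto_intros)
  then have "Limsup (at_right 0) (\<lambda>\<alpha>. ereal (?bound \<alpha>)) = 0"
    by (intro lim_imp_Limsup) (simp_all add: zero_ereal_def)
  moreover have "\<forall>\<^sub>F \<alpha> in at_right 0. E_sg M \<alpha> \<phi> \<le> ereal (?bound \<alpha>)"
    using eventually_at_right_less[of 0] by eventually_elim (rule E_sg_le[OF _ True])
  then have "Limsup (at_right 0) (\<lambda>\<alpha>. E_sg M \<alpha> \<phi>) \<le> Limsup (at_right 0) (\<lambda>\<alpha>. ereal (?bound \<alpha>))"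
    by (rule Limsup_mono)
  ultimately show ?thesis by (simp add: I_K_def)
qed (simp add: I_K_def)

theorem mainTheorem8:
  fixes \<Omega> :: "(real^3) set" and T' :: real
  assumes "open \<Omega>" and "connected \<Omega>" and "\<Omega> \<noteq> {}" and "bounded \<Omega>" and "T' > 0"
  defines "M \<equiv> lebesgue_on (cyl \<Omega> T')"
  shows "(\<forall>\<phi>s \<phi>. (\<forall>\<alpha>>0. L2 M (\<phi>s \<alpha>)) \<and> L2 M \<phi> \<and> weak_L2_conv M \<phi>s \<phi> (at_right 0)
            \<longrightarrow> Liminf (at_right 0) (\<lambda>\<alpha>. E_sg M \<alpha> (\<phi>s \<alpha>)) \<ge> I_K M \<phi>)
       \<and> (\<forall>\<phi>. L2 M \<phi> \<longrightarrow>
            (\<exists>\<phi>s. (\<forall>\<alpha>>0. L2 M (\<phi>s \<alpha>)) \<and> strong_L2_conv M \<phi>s \<phi> (at_right 0)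
                  \<and> Limsup (at_right 0) (\<lambda>\<alpha>. E_sg M \<alpha> (\<phi>s \<alpha>)) \<le> I_K M \<phi>))"
proof -
  have "cyl \<Omega> T' \<in> lmeasurable"
    unfolding cyl_def using assms(1,4) by (intro lmeasurable_open bounded_Times open_Times) auto
  then interpret finite_measure M unfolding M_def by (rule finite_measure_lebesgue_on)
  show ?thesis
    using I_K_le_Liminf_E_sg Limsup_E_sg_le_I_K
    by (auto intro!: exI[of _ "\<lambda>_. \<phi>" for \<phi>] simp: strong_L2_conv_def)
qed

end
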